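(* Let $\mu$ be a cardinal with $\aleph_0<\kappa=\mathrm{cf}(\mu)<\mu$, $\lambda=\mu^+$, and let $\mu=\sum_{i<\kappa}\mu_i$ where $\langle\mu_i:i<\kappa\rangle$ is an increasing continuous sequence of cardinals with $\mu_0>\kappa$. Then there is a sequence $\langle a^\alpha_i: i<\kappa,\alpha<\lambda\rangle$ such that for every $\alpha<\lambda$ the sets $a^\alpha_i$ ($i<\kappa$) are subsets of $\alpha$, $\subseteq$-increasing in $i$, with $|a^\alpha_i|\le\mu_i$, and such that for every function $f:\lambda\to\lambda$, letting $A^f_i=\{\alpha<\lambda:\alpha=\sup\{\zeta\in a^\alpha_i: f(\zeta)\in a^\alpha_i\}\}$, we have: (A) the sets $A^f_i$ are $\subseteq$-increasing in $i$; (B) $\{\delta<\lambda:\mathrm{cf}(\delta)\ne\kappa\}\setminus\bigcup_{i<\kappa}A^f_i$ is non-stationary in $\lambda$; (C) if $\gamma<\lambda$ with $\aleph_0<\mathrm{cf}(\gamma)\le\kappa$ (in particular if $\mathrm{cf}(\gamma)=\kappa$), $i<\kappa$, and $A^f_i$ reflects at $\gamma$, then $\gamma\in A^f_i$; (C') consequently, letting $S_f=S^\lambda_\kappa\setminus\bigcup_{i<\kappa}A^f_i$, for no $i<\kappa$ does $A^f_i$ reflect at any $\delta\in S_f$; (D) there is a non-stationary set $N\subseteq\lambda$ such that $S_f\setminus N\in{\cal I}[\lambda,\kappa)$.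
   Context: $S^\lambda_\kappa=\{\delta<\lambda:\mathrm{cf}(\delta)=\kappa\}$. A set $A\subseteq\lambda$ reflects at $\gamma<\lambda$ if $\mathrm{cf}(\gamma)>\aleph_0$ and $A\cap\gamma$ is stationary in $\gamma$. ${\cal I}[\lambda,\kappa)$ is the family of all $A\subseteq\lambda$ for which there is a function $h:\lambda\to\kappa$ such that for every $\delta\in A\cap S^\lambda_\kappa$ there is a club $C$ of $\delta$ with $h\restriction C$ strictly increasing. *)

theory Defs
  imports Main "HOL-Library.Countable_Set"
begin

unbundle cardinal_syntax

text \<open>Ordinals below lambda are modelled as elements of a well-ordered type 'a whose
order type is lambda (see the assumptions of the theorem). Cardinals below lambda are
initial ordinals, i.e. elements of 'a.\<close>

definition seg :: "'a::wellorder \<Rightarrow> 'a set" where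
  "seg x = {z. z < x}"

definition ord0 :: "'a::wellorder" where
  "ord0 = (LEAST x. True)"

definition is_limit :: "'a::wellorder \<Rightarrow> bool" where
  "is_limit j \<longleftrightarrow> j \<noteq> ord0 \<and> (\<forall>b<j. \<exists>c. b < c \<and> c < j)"

definition is_cardinal :: "'a::wellorder \<Rightarrow> bool" where
  "is_cardinal x \<longleftrightarrow> (\<forall>y<x. card_of (seg y) <o card_of (seg x))"

definition cofinal_in :: "'a::wellorder set \<Rightarrow> 'a \<Rightarrow> bool" where
  "cofinal_in C d \<longleftrightarrow> C \<subseteq> seg d \<and> (\<forall>b<d. \<exists>c\<in>C. b \<le> c)"

definition cf :: "'a::wellorder \<Rightarrow> 'a" where
  "cf d = (LEAST t. \<exists>C. cofinal_in C d \<and> card_of C =o card_of (seg t))"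

definition is_sup_of :: "'a::wellorder \<Rightarrow> 'a set \<Rightarrow> bool" where
  "is_sup_of d X \<longleftrightarrow> (\<forall>b<d. \<exists>z\<in>X. b < z)"

definition club_below :: "'a::wellorder \<Rightarrow> 'a set \<Rightarrow> bool" where
  "club_below g C \<longleftrightarrow> C \<subseteq> seg g \<and> (\<forall>b<g. \<exists>c\<in>C. b < c)
     \<and> (\<forall>d<g. (\<exists>c\<in>C. c < d) \<and> (\<forall>b<d. \<exists>c\<in>C. b < c \<and> c < d) \<longrightarrow> d \<in> C)"

definition stationary_below :: "'a::wellorder \<Rightarrow> 'a set \<Rightarrow> bool" where
  "stationary_below g A \<longleftrightarrow> A \<subseteq> seg g \<and> (\<forall>C. club_below g C \<longrightarrow> A \<inter> C \<noteq> {})"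

definition club :: "'a::wellorder set \<Rightarrow> bool" where
  "club C \<longleftrightarrow> (\<forall>b. \<exists>c\<in>C. b < c)
     \<and> (\<forall>d. (\<exists>c\<in>C. c < d) \<and> (\<forall>b<d. \<exists>c\<in>C. b < c \<and> c < d) \<longrightarrow> d \<in> C)"

definition stationary :: "'a::wellorder set \<Rightarrow> bool" where
  "stationary A \<longleftrightarrow> (\<forall>C. club C \<longrightarrow> A \<inter> C \<noteq> {})"

definition reflects :: "'a::wellorder set \<Rightarrow> 'a \<Rightarrow> bool" where
  "reflects A g \<longleftrightarrow> \<not> countable (seg (cf g)) \<and> stationary_below g (A \<inter> seg g)"

definition Scof :: "'a::wellorder \<Rightarrow> 'a set" where
  "Scof k = {d. cf d = k}"

definition Ideal_I :: "'a::wellorder \<Rightarrow> 'a set set" where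
  "Ideal_I k = {A. \<exists>h::'a \<Rightarrow> 'a. (\<forall>x. h x < k) \<and>
      (\<forall>d\<in>A \<inter> Scof k. \<exists>C. club_below d C \<and> strict_mono_on C h)}"

definition Aset :: "('a::wellorder \<Rightarrow> 'a \<Rightarrow> 'a set) \<Rightarrow> ('a \<Rightarrow> 'a) \<Rightarrow> 'a \<Rightarrow> 'a set" where
  "Aset a f i = {al. is_sup_of al {z \<in> a al i. f z \<in> a al i}}"

end

theory Submission
  imports Defs "HOL-Library.Countable_Set_Type"
begin

text \<open>Fix for every d an injection of d into the disjoint sum of the mu_i, i < kappa, and let
  b^d_i be the ordinals below d coded at a level \<le> i; when cf d \<le> kappa fix moreover a club
  e_d of d of size \<le> kappa, the ladder of d. Put a^d_i = b^d_i \<union> e_d \<union> \<Union>{a^c_i | c \<in> e_d}.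
  Every z < d, together with f z, enters b^d_i from some level i < kappa on. For d in the club
  E_f of limits of f-closed ordinals this gives (B): if cf d < kappa, the levels along a cofinal
  set of size cf d are bounded by regularity of kappa; if cf d > kappa, a pigeonhole argument
  applies. (C) holds because stationarity of A_i below g yields points c of A_i on the ladder of
  g, and a^c_i \<subseteq> a^g_i. For (D), take d \<in> S_f \<inter> E_f: by (C) each A_j misses a club D_j of d,
  and on a club T of d whose proper initial segments have size < kappa and whose points lie in
  E_f and have cofinality \<noteq> kappa, hence lie in some A_i, the least such i is strictly increasing
  along the diagonal intersection of the D_j.\<close>

lemma Well_order_le: "Well_order {(x::'a::wellorder, y). x \<le> y}"
  unfolding well_order_on_def linear_order_on_def partial_order_on_def preorder_on_def
    refl_on_def trans_def antisym_def total_on_def Field_def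
  by (auto intro: wf_subset[OF wf])

lemma seg_mono: "x \<le> y \<Longrightarrow> seg x \<subseteq> seg y"
  unfolding seg_def by auto

lemma ord0_le: "ord0 \<le> x"
  unfolding ord0_def by (rule Least_le) simp

lemma card_of_finite_less_infinite: "finite A \<Longrightarrow> \<not> finite B \<Longrightarrow> |A| <o |B|"
  by (rule finite_ordLess_infinite) (auto simp: Field_card_of card_of_well_order_on)

lemma card_of_countable_less_uncountable:
  assumes "countable (Y::'b set)" "\<not> countable (Z::'c set)" shows "|Y| <o |Z|"
proof -
  have "|Y| \<le>o |UNIV::nat set|" "\<not> |Z| \<le>o |UNIV::nat set|"
    using assms countable_card_of_nat by blast+
  hence "\<not> |Z| \<le>o |Y|" using ordLeq_transitive by metis
  thus ?thesis using not_ordLeq_iff_ordLess card_of_Well_order by metis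
qed

lemma card_of_Un_ordLeq_infinite:
  assumes "\<not> finite C" "|A| \<le>o |C|" "|B| \<le>o |C|" shows "|A \<union> B| \<le>o |C|"
  using card_of_Un_ordLeq_infinite_Field[of "|C|" A B] assms
  by (simp add: Field_card_of card_of_card_order_on)

lemma card_of_insert_ordLess_infinite:
  assumes "\<not> finite C" "|A| <o |C|" shows "|insert a A| <o |C|"
  using card_of_Un_ordLess_infinite[OF assms(1) card_of_finite_less_infinite[OF _ assms(1)] assms(2)]
  by (metis finite.emptyI finite_insert insert_is_Un)

lemma ex_seg_card_of_eq:
  assumes "|Y::'a::wellorder set| <o |UNIV::'a set|"
  shows "\<exists>t::'a. |Y| =o |seg t|"
proof -
  let ?r = "{(x::'a, y). x \<le> y}"
  have F: "Field ?r = UNIV" unfolding Field_def by auto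
  hence "|Y| <o ?r"
    using card_of_least[of UNIV ?r] Well_order_le assms ordLess_ordLeq_trans by metis
  then obtain a where "|Y| =o Restr ?r (underS ?r a)"
    using ordLess_iff_ordIso_Restr[OF Well_order_le card_of_Well_order] F by auto
  hence "|Field |Y|| =o |Field (Restr ?r (underS ?r a))|" by (rule card_of_cong)
  moreover have "Field (Restr ?r (underS ?r a)) = seg a"
    unfolding Field_def underS_def seg_def by auto
  ultimately show ?thesis by (auto simp: Field_card_of)
qed

subsection \<open>Cofinality\<close>

lemma ex_cofinal_card_cf: "\<exists>C. cofinal_in C d \<and> |C| =o |seg (cf d)|"
proof -
  have "\<exists>C. cofinal_in C d \<and> |C| =o |seg (d::'a::wellorder)|"
    by (rule exI[of _ "seg d"]) (auto simp: cofinal_in_def seg_def card_of_refl)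
  hence "\<exists>t::'a. \<exists>C. cofinal_in C d \<and> |C| =o |seg t|" by blast
  thus ?thesis unfolding cf_def by (rule LeastI_ex)
qed

lemma cf_le_of_cofinal: "cofinal_in C d \<Longrightarrow> |C| =o |seg t| \<Longrightarrow> cf d \<le> t"
  unfolding cf_def by (rule Least_le) blast

lemma card_of_seg_less_cf:
  assumes "t < cf d" shows "|seg t| <o |seg (cf d)|"
proof (rule ccontr)
  assume "\<not> |seg t| <o |seg (cf d)|"
  moreover have "|seg t| \<le>o |seg (cf d)|"
    using assms seg_mono card_of_mono1 by (metis less_imp_le)
  ultimately have "|seg (cf d)| =o |seg t|"
    using not_ordLess_iff_ordLeq card_of_Well_order ordIso_iff_ordLeq by blast
  moreover obtain C where "cofinal_in C d" "|C| =o |seg (cf d)|" using ex_cofinal_card_cf by blast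
  ultimately have "cf d \<le> t" using cf_le_of_cofinal ordIso_transitive by blast
  thus False using assms by simp
qed

lemma cf_le: "cf d \<le> d"
  by (rule cf_le_of_cofinal[of "seg d"]) (auto simp: cofinal_in_def seg_def card_of_refl)

lemma card_of_seg_cf_le:
  assumes "cofinal_in Y (g::'a::wellorder)" shows "|seg (cf g)| \<le>o |Y|"
proof (rule ccontr)
  assume "\<not> |seg (cf g)| \<le>o |Y|"
  hence "|Y| <o |seg (cf g)|" using not_ordLeq_iff_ordLess card_of_Well_order by blast
  hence "|Y| <o |UNIV::'a set|"
    using card_of_mono1[of "seg (cf g)" UNIV] ordLess_ordLeq_trans by blast
  then obtain t :: 'a where t: "|Y| =o |seg t|" using ex_seg_card_of_eq by blast
  hence "|seg (cf g)| \<le>o |seg t|"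
    using card_of_mono1[OF seg_mono[OF cf_le_of_cofinal[OF assms]]] by blast
  hence "|seg (cf g)| \<le>o |Y|" using t ordIso_symmetric ordLeq_ordIso_trans by blast
  thus False using \<open>\<not> |seg (cf g)| \<le>o |Y|\<close> by blast
qed

lemma bounded_of_card_less_cf:
  assumes "Y \<subseteq> seg g" "|Y| <o |seg (cf g)|" shows "\<exists>b<g. \<forall>y\<in>Y. y<b"
proof (rule ccontr)
  assume "\<not> (\<exists>b<g. \<forall>y\<in>Y. y<b)"
  hence "cofinal_in Y g" using assms(1) unfolding cofinal_in_def by (meson not_less)
  thus False using card_of_seg_cf_le assms(2) not_ordLess_ordLeq by blast
qed

text \<open>Regularity of cf m: an unbounded subset of cf m of smaller size, composed with an
  enumeration of a cofinal subset of m, would give a cofinal subset of m of size below cf m.\<close>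
lemma bounded_in_cf_of_card_less:
  assumes "Y \<subseteq> seg (cf m)" "|Y| <o |seg (cf m)|" shows "\<exists>i<cf m. \<forall>y\<in>Y. y \<le> i"
proof (rule ccontr)
  assume "\<not> (\<exists>i<cf m. \<forall>y\<in>Y. y \<le> i)"
  hence unb: "\<forall>t<cf m. \<exists>y\<in>Y. t<y" by (meson not_le)
  obtain X where X: "cofinal_in X m" "|X| =o |seg (cf m)|" using ex_cofinal_card_cf by blast
  obtain x where x: "bij_betw x (seg (cf m)) X"
    using ordIso_symmetric[OF X(2)] card_of_ordIso by blast
  have "\<exists>b<m. \<forall>c\<in>x ` seg y. c < b" if "y \<in> Y" for y
  proof (rule bounded_of_card_less_cf)
    have "y < cf m" using assms(1) that seg_def by blast
    hence "seg y \<subseteq> seg (cf m)" using seg_mono less_imp_le by blast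
    thus "x ` seg y \<subseteq> seg m"
      using x X(1) unfolding bij_betw_def cofinal_in_def by blast
    show "|x ` seg y| <o |seg (cf m)|"
      using card_of_image card_of_seg_less_cf[OF \<open>y < cf m\<close>] by (rule ordLeq_ordLess_trans)
  qed
  then obtain bd where bd: "\<forall>y\<in>Y. bd y < m \<and> (\<forall>c\<in>x ` seg y. c < bd y)" by metis
  have "|bd ` Y| <o |seg (cf m)|" using card_of_image assms(2) by (rule ordLeq_ordLess_trans)
  moreover have "bd ` Y \<subseteq> seg m" using bd seg_def by auto
  ultimately obtain s where s: "s < m" "\<forall>b\<in>bd ` Y. b < s" using bounded_of_card_less_cf by blast
  obtain t where t: "t < cf m" "s \<le> x t"
    using X(1) x s(1) unfolding cofinal_in_def bij_betw_def seg_def by auto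
  obtain y where y: "y\<in>Y" "t<y" using unb t(1) by blast
  hence "x t < bd y" using bd by (simp add: seg_def)
  thus False using s y t(2) by fastforce
qed

lemma card_of_atMost_less_cf:
  assumes "\<not> finite (seg (cf d))" "j < cf d" shows "|{i. i \<le> j}| <o |seg (cf d)|"
proof -
  have "{i. i \<le> j} = insert j (seg j)" by (auto simp: seg_def)
  thus ?thesis using card_of_insert_ordLess_infinite[OF assms(1) card_of_seg_less_cf[OF assms(2)]]
    by simp
qed

lemma ex_between_of_uncountable_cf:
  assumes "\<not> countable (seg (cf g))" "b < g" shows "\<exists>c. b<c \<and> c<g"
proof (rule ccontr)
  assume "\<not> (\<exists>c. b<c \<and> c<g)"
  hence "\<forall>b'<g. b' \<le> b" by (meson not_less)
  hence "cofinal_in {b} g" using assms(2) unfolding cofinal_in_def seg_def by blast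
  hence "|seg (cf g)| \<le>o |{b}|" by (rule card_of_seg_cf_le)
  hence "|seg (cf g)| \<le>o |UNIV::nat set|"
    using countable_card_of_nat[of "{b}"] ordLeq_transitive by auto
  thus False using assms(1) countable_card_of_nat by blast
qed

subsection \<open>Limit points and closures\<close>

definition limit_point :: "'a::wellorder set \<Rightarrow> 'a \<Rightarrow> bool" where
  "limit_point X c \<longleftrightarrow> (\<exists>x\<in>X. x<c) \<and> (\<forall>b<c. \<exists>x\<in>X. b<x \<and> x<c)"

definition closure_below :: "'a::wellorder set \<Rightarrow> 'a \<Rightarrow> 'a set" where
  "closure_below X d = {c. c<d \<and> (c\<in>X \<or> limit_point X c)}"

lemma limit_point_mono: "limit_point Y d \<Longrightarrow> Y \<subseteq> X \<Longrightarrow> limit_point X d"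
  unfolding limit_point_def by blast

lemma limit_point_trans:
  assumes "\<forall>c\<in>Y. c \<in> X \<or> limit_point X c" "limit_point Y d" shows "limit_point X d"
proof -
  have below: "\<exists>x\<in>X. b < x \<and> x \<le> y" if "y \<in> Y" "b < y" for b y
  proof (cases "y \<in> X")
    case False
    hence "limit_point X y" using that(1) assms(1) by blast
    thus ?thesis using that(2) unfolding limit_point_def by (auto intro: less_imp_le)
  qed (use that in blast)
  obtain y where "y \<in> Y" "y < d" using assms(2) unfolding limit_point_def by blast
  moreover have "\<exists>x\<in>X. x \<le> y"
  proof (cases "y \<in> X")
    case False
    hence "limit_point X y" using \<open>y \<in> Y\<close> assms(1) by blast
    thus ?thesis unfolding limit_point_def by (auto intro: less_imp_le)
  qed blast
  ultimately have "\<exists>x\<in>X. x < d" by (meson le_less_trans)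
  moreover have "\<exists>x\<in>X. b < x \<and> x < d" if "b < d" for b
  proof -
    obtain c where "c \<in> Y" "b < c" "c < d" using assms(2) \<open>b < d\<close> unfolding limit_point_def by blast
    thus ?thesis using below by (meson le_less_trans)
  qed
  ultimately show ?thesis unfolding limit_point_def by blast
qed

lemma limit_point_closure_below: "limit_point (closure_below X d) c \<Longrightarrow> limit_point X c"
  by (rule limit_point_trans[of _ X]) (auto simp: closure_below_def)

lemma closure_below_subset_seg: "closure_below X d \<subseteq> seg d"
  unfolding closure_below_def seg_def by auto

lemma subset_closure_below: "X \<subseteq> seg d \<Longrightarrow> X \<subseteq> closure_below X d"
  unfolding closure_below_def seg_def by auto

lemma club_below_closed: "club_below d C \<Longrightarrow> e<d \<Longrightarrow> limit_point C e \<Longrightarrow> e\<in>C"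
  unfolding club_below_def limit_point_def by blast

lemma club_below_closure_below:
  assumes "X \<subseteq> seg d" "\<forall>b<d. \<exists>c\<in>X. b<c" shows "club_below d (closure_below X d)"
  unfolding club_below_def
proof (intro conjI allI impI)
  show "closure_below X d \<subseteq> seg d" by (rule closure_below_subset_seg)
  show "\<exists>c\<in>closure_below X d. b < c" if "b<d" for b
    using assms that subset_closure_below by blast
next
  fix e assume "e<d" "(\<exists>c\<in>closure_below X d. c < e) \<and> (\<forall>b<e. \<exists>c\<in>closure_below X d. b < c \<and> c < e)"
  hence "limit_point X e" using limit_point_closure_below unfolding limit_point_def by blast
  thus "e \<in> closure_below X d" using \<open>e<d\<close> closure_below_def by blast
qed

lemma club_below_above:
  assumes "club_below d C" "b<d" shows "club_below d {c\<in>C. b<c}"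
  unfolding club_below_def
proof (intro conjI allI impI)
  show "{c\<in>C. b<c} \<subseteq> seg d" using assms(1) unfolding club_below_def by blast
next
  fix b' assume "b'<d"
  hence "max b b' < d" using assms(2) by simp
  then obtain c where "c\<in>C" "max b b' < c" using assms(1) unfolding club_below_def by blast
  thus "\<exists>c\<in>{c\<in>C. b<c}. b' < c" by auto
next
  fix e assume e: "e<d" "(\<exists>c\<in>{c\<in>C. b<c}. c < e) \<and> (\<forall>b'<e. \<exists>c\<in>{c\<in>C. b<c}. b' < c \<and> c < e)"
  hence "e \<in> C" using club_below_closed[OF assms(1)] unfolding limit_point_def by blast
  moreover have "b < e" using e(2) by force
  ultimately show "e \<in> {c\<in>C. b<c}" by blast
qed

lemma not_stationary_Compl_club: "club C \<Longrightarrow> \<not> stationary (- C)"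
  unfolding stationary_def by blast

text \<open>A limit point of X that is not the supremum of X is determined by the least element of X
  above it.\<close>
lemma card_of_limit_points_below_ordLeq: "|{c. limit_point X c \<and> c\<notin>X \<and> (\<exists>x\<in>X. c<x)}| \<le>o |X|"
proof -
  let ?Y = "{c. limit_point X c \<and> c\<notin>X \<and> (\<exists>x\<in>X. c<x)}"
  define m where "m c = (LEAST x. x\<in>X \<and> c<x)" for c
  have m: "m c \<in> X \<and> c < m c" if "c \<in> ?Y" for c
    using that LeastI_ex[of "\<lambda>x. x\<in>X \<and> c<x"] unfolding m_def by blast
  have m_le: "m c \<le> x" if "x\<in>X" "c<x" for c x
    unfolding m_def by (rule Least_le) (use that in blast)
  have less: "m c1 < m c2" if "c1 \<in> ?Y" "c2 \<in> ?Y" "c1 < c2" for c1 c2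
  proof -
    have "limit_point X c2" using that(2) by blast
    then obtain x where "x\<in>X" "c1<x" "x<c2" using \<open>c1 < c2\<close> unfolding limit_point_def by blast
    hence "m c1 < c2" using m_le[of x c1] by (meson le_less_trans)
    thus ?thesis using m[OF that(2)] by (meson less_trans)
  qed
  have "inj_on m ?Y"
  proof (rule inj_onI)
    fix c1 c2 assume "c1 \<in> ?Y" "c2 \<in> ?Y" "m c1 = m c2"
    thus "c1 = c2" using less[of c1 c2] less[of c2 c1] by (cases c1 c2 rule: linorder_cases) auto
  qed
  thus ?thesis using m by (intro card_of_ordLeqI) auto
qed

lemma closure_below_subset_limit_points:
  assumes "\<forall>c\<in>closure_below X d. \<exists>x\<in>X. c \<le> x"
  shows "closure_below X d \<subseteq> X \<union> {c. limit_point X c \<and> c\<notin>X \<and> (\<exists>x\<in>X. c<x)}"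
  using assms unfolding closure_below_def by (auto simp: le_less)

lemma card_of_closure_below_ordLeq:
  assumes "cofinal_in X d" "\<not> finite C" "|X| \<le>o |C|"
  shows "|closure_below X d| \<le>o |C|"
proof -
  have "closure_below X d \<subseteq> X \<union> {c. limit_point X c \<and> c\<notin>X \<and> (\<exists>x\<in>X. c<x)}"
    using assms(1) by (intro closure_below_subset_limit_points)
      (auto simp: cofinal_in_def closure_below_def)
  moreover have "|X \<union> {c. limit_point X c \<and> c\<notin>X \<and> (\<exists>x\<in>X. c<x)}| \<le>o |C|"
    using card_of_Un_ordLeq_infinite assms(2,3)
      ordLeq_transitive[OF card_of_limit_points_below_ordLeq assms(3)] by blast
  ultimately show ?thesis using card_of_mono1 ordLeq_transitive by blast
qed

lemma limit_point_restrict: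
  assumes "limit_point X c" "c \<le> x" shows "limit_point {y\<in>X. y \<le> x} c"
proof -
  have "\<forall>y\<in>X. y < c \<longrightarrow> y \<in> {y\<in>X. y \<le> x}" using assms(2) by auto
  thus ?thesis using assms(1) unfolding limit_point_def by blast
qed

lemma le_of_limit_point_restrict:
  assumes "limit_point {y\<in>X. y \<le> x} c" shows "c \<le> x"
proof (rule ccontr)
  assume "\<not> c \<le> x"
  hence "x < c" by simp
  then obtain y where "y \<in> {y\<in>X. y \<le> x}" "x < y" using assms unfolding limit_point_def by blast
  thus False by (auto dest: leD)
qed

lemma card_of_closure_below_Int_seg_ordLess:
  assumes "x \<in> X" "b \<le> x" "\<not> finite C" "|{y\<in>X. y \<le> x}| <o |C|"
  shows "|closure_below X d \<inter> seg b| <o |C|"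
proof -
  let ?X = "{y\<in>X. y \<le> x}"
  have "closure_below X d \<inter> seg b \<subseteq> closure_below ?X d"
    using assms(2) limit_point_restrict unfolding closure_below_def seg_def
    by (fastforce dest: less_le_trans intro: less_imp_le)
  moreover have "\<forall>c\<in>closure_below ?X d. \<exists>x\<in>?X. c \<le> x"
    using assms(1) le_of_limit_point_restrict unfolding closure_below_def by blast
  ultimately have "closure_below X d \<inter> seg b \<subseteq>
      ?X \<union> {c. limit_point ?X c \<and> c\<notin>?X \<and> (\<exists>x\<in>?X. c<x)}"
    using closure_below_subset_limit_points by blast
  moreover have "|?X \<union> {c. limit_point ?X c \<and> c\<notin>?X \<and> (\<exists>x\<in>?X. c<x)}| <o |C|"
    using card_of_Un_ordLess_infinite assms(3,4)
      ordLeq_ordLess_trans[OF card_of_limit_points_below_ordLeq assms(4)] by blast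
  ultimately show ?thesis using card_of_mono1 ordLeq_ordLess_trans by blast
qed

subsection \<open>Sequences of length omega\<close>

definition seq_limit :: "(nat \<Rightarrow> 'a::wellorder) \<Rightarrow> 'a \<Rightarrow> bool" where
  "seq_limit s d \<longleftrightarrow> (\<forall>n. s n < d) \<and> (\<forall>b<d. \<exists>n. b < s n)"

lemma ex_seq_limit:
  fixes U :: "'a::wellorder set"
  assumes down: "\<And>x y. x\<in>U \<Longrightarrow> y \<le> x \<Longrightarrow> y\<in>U"
    and step: "\<And>x. x\<in>U \<Longrightarrow> \<exists>y\<in>U. x<y \<and> R x y"
    and bounded: "\<And>Y. Y \<subseteq> U \<Longrightarrow> countable Y \<Longrightarrow> \<exists>x\<in>U. \<forall>y\<in>Y. y<x"
    and "b\<in>U"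
  shows "\<exists>s d. s 0 = b \<and> (\<forall>n. s n < s (Suc n) \<and> R (s n) (s (Suc n))) \<and> d\<in>U \<and> seq_limit s d"
proof -
  define s where "s = rec_nat b (\<lambda>n x. SOME y. y\<in>U \<and> x<y \<and> R x y)"
  have s_Suc: "s (Suc n) = (SOME y. y\<in>U \<and> s n<y \<and> R (s n) y)" for n
    unfolding s_def by simp
  have step': "\<exists>y. y\<in>U \<and> x<y \<and> R x y" if "x\<in>U" for x
    using step[OF that] by blast
  have sU: "s n \<in> U" for n
  proof (induction n)
    case 0 show ?case using \<open>b\<in>U\<close> by (simp add: s_def)
  next
    case (Suc n) show ?case using someI_ex[OF step'[OF Suc]] s_Suc[of n] by simp
  qed
  have s: "s n < s (Suc n) \<and> R (s n) (s (Suc n))" for n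
    using someI_ex[OF step'[OF sU[of n]]] s_Suc[of n] by simp
  obtain x where x: "x\<in>U" "\<forall>n. s n < x" using bounded[of "range s"] sU by auto
  define d where "d = (LEAST d. \<forall>n. s n \<le> d)"
  have "\<forall>n. s n \<le> d" unfolding d_def by (rule LeastI[of _ x]) (use x in \<open>auto intro: less_imp_le\<close>)
  hence "\<forall>n. s n < d" using s by (meson less_le_trans)
  moreover have "d \<le> x" unfolding d_def by (rule Least_le) (use x in \<open>auto intro: less_imp_le\<close>)
  hence "d \<in> U" using down x by blast
  moreover have "\<exists>n. b'<s n" if "b' < d" for b'
  proof (rule ccontr)
    assume "\<not> (\<exists>n. b' < s n)"
    hence "d \<le> b'" unfolding d_def by (intro Least_le) (auto simp: not_less)
    thus False using \<open>b' < d\<close> by simp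
  qed
  moreover have "s 0 = b" by (simp add: s_def)
  ultimately show ?thesis using s unfolding seq_limit_def by blast
qed

lemma countable_cf_of_seq_limit:
  assumes "seq_limit s d" shows "countable (seg (cf d))"
proof -
  have "cofinal_in (range s) d"
    using assms unfolding seq_limit_def cofinal_in_def seg_def by (blast intro: less_imp_le)
  hence "|seg (cf d)| \<le>o |range s|" by (rule card_of_seg_cf_le)
  moreover have "|range s| \<le>o |UNIV::nat set|" using countable_card_of_nat by blast
  ultimately show ?thesis using countable_card_of_nat ordLeq_transitive by blast
qed

lemma ex_seq_limit_below:
  assumes "\<not> countable (seg (cf g))" and step: "\<And>x. x < g \<Longrightarrow> \<exists>y<g. x<y \<and> R x y" and "b < g"
  shows "\<exists>s d. s 0 = b \<and> (\<forall>n. s n < s (Suc n) \<and> R (s n) (s (Suc n))) \<and> d < g \<and> seq_limit s d"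
proof -
  have "\<exists>s d. s 0 = b \<and> (\<forall>n. s n < s (Suc n) \<and> R (s n) (s (Suc n))) \<and> d \<in> seg g \<and> seq_limit s d"
  proof (rule ex_seq_limit)
    fix Y :: "'a set" assume "Y \<subseteq> seg g" "countable Y"
    thus "\<exists>x\<in>seg g. \<forall>y\<in>Y. y < x"
      using bounded_of_card_less_cf card_of_countable_less_uncountable assms(1) seg_def
      by (metis mem_Collect_eq)
  qed (use step \<open>b < g\<close> in \<open>auto simp: seg_def\<close>)
  thus ?thesis by (auto simp: seg_def)
qed

lemma limit_point_of_seq_limit:
  assumes "seq_limit s e" "\<forall>n. s n < s (Suc n)" "\<forall>n\<ge>n0. \<exists>p\<in>X. s n < p \<and> p < s (Suc n)"
  shows "limit_point X e"
  unfolding limit_point_def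
proof (intro conjI allI impI)
  obtain p where "p\<in>X" "p < s (Suc n0)" using assms(3) by blast
  thus "\<exists>p\<in>X. p < e" using assms(1) unfolding seq_limit_def by (meson less_trans)
next
  fix b assume "b < e"
  then obtain n1 where "b < s n1" using assms(1) unfolding seq_limit_def by blast
  moreover have "s n1 \<le> s (max n0 n1)"
    using lift_Suc_mono_le[of s n1 "max n0 n1"] assms(2) by (simp add: less_imp_le)
  moreover obtain p where "p\<in>X" "s (max n0 n1) < p" "p < s (Suc (max n0 n1))"
    using assms(3)[rule_format, of "max n0 n1"] by auto
  ultimately show "\<exists>p\<in>X. b < p \<and> p < e"
    using assms(1) unfolding seq_limit_def by (meson le_less_trans less_trans)
qed

lemma ex_limit_point_countable_cf:
  assumes "\<not> countable (seg (cf d))" "limit_point X d" "y < d"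
  shows "\<exists>p. y<p \<and> p<d \<and> limit_point X p \<and> countable (seg (cf p))"
proof -
  have "\<exists>s p. s 0 = y \<and> (\<forall>n. s n < s (Suc n) \<and> (\<exists>q\<in>X. s n<q \<and> q<s (Suc n))) \<and> p < d \<and> seq_limit s p"
  proof (rule ex_seq_limit_below[OF assms(1) _ assms(3)])
    fix x assume "x < d"
    then obtain q where "q\<in>X" "x<q" "q<d" using assms(2) unfolding limit_point_def by blast
    moreover obtain z where "q<z" "z<d" using ex_between_of_uncountable_cf[OF assms(1) \<open>q<d\<close>] by blast
    ultimately show "\<exists>z<d. x<z \<and> (\<exists>q\<in>X. x<q \<and> q<z)" by (meson less_trans)
  qed
  then obtain s p where "s 0 = y" "\<forall>n. s n < s (Suc n) \<and> (\<exists>q\<in>X. s n<q \<and> q<s (Suc n))"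
    "p < d" "seq_limit s p" by blast
  moreover from this have "limit_point X p" by (intro limit_point_of_seq_limit[of s p 0]) auto
  ultimately show ?thesis using countable_cf_of_seq_limit unfolding seq_limit_def by metis
qed

subsection \<open>Thin clubs and diagonal intersections\<close>

lemma ex_unbounded_subset_card_cf:
  assumes "\<forall>b<d. \<exists>w\<in>W. b<w"
  shows "\<exists>V\<subseteq>W. (\<forall>b<d. \<exists>v\<in>V. b<v) \<and> |V| \<le>o |seg (cf d)|"
proof -
  obtain Y where Y: "cofinal_in Y d" "|Y| =o |seg (cf d)|" using ex_cofinal_card_cf by blast
  have "\<forall>y\<in>Y. \<exists>w\<in>W. y<w" using Y(1) assms unfolding cofinal_in_def seg_def by blast
  then obtain p where p: "\<forall>y\<in>Y. p y \<in> W \<and> y < p y" by metis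
  have "\<exists>v\<in>p ` Y. b<v" if "b<d" for b
  proof -
    obtain y where "y\<in>Y" "b \<le> y" using Y(1) \<open>b<d\<close> unfolding cofinal_in_def by blast
    thus ?thesis using p by (meson image_eqI le_less_trans)
  qed
  moreover have "|p ` Y| \<le>o |seg (cf d)|" using card_of_image Y(2) by (rule ordLeq_ordIso_trans)
  moreover have "p ` Y \<subseteq> W" using p by blast
  ultimately show ?thesis by blast
qed

definition records :: "('a::wellorder \<Rightarrow> 'b::order) \<Rightarrow> 'a \<Rightarrow> 'b set" where
  "records w k = {w e | e. e < k \<and> (\<forall>e'<e. w e' < w e)}"

lemma records_subset_image: "records w k \<subseteq> w ` seg k"
  unfolding records_def seg_def by blast

lemma ex_records_greater:
  fixes w :: "'a::wellorder \<Rightarrow> 'b::linorder"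
  assumes "e0 < k" "b < w e0" shows "\<exists>x\<in>records w k. b < x"
proof -
  define e where "e = (LEAST e. e < k \<and> b < w e)"
  have e: "e < k \<and> b < w e" unfolding e_def by (rule LeastI[of _ e0]) (use assms in blast)
  have "w e' < w e" if "e' < e" for e'
  proof -
    have "\<not> (e' < k \<and> b < w e')" using that unfolding e_def by (rule not_less_Least)
    hence "w e' \<le> b" using e that by (meson less_trans not_less)
    thus ?thesis using e by (meson le_less_trans)
  qed
  thus ?thesis unfolding records_def using e by blast
qed

lemma records_le_subset:
  fixes w :: "'a::wellorder \<Rightarrow> 'b::linorder"
  assumes "x \<in> records w k" shows "\<exists>e<k. {y \<in> records w k. y \<le> x} \<subseteq> w ` {e'. e' \<le> e}"
proof -
  obtain e where e: "x = w e" "e < k" using assms unfolding records_def by blast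
  have "y \<in> w ` {e'. e' \<le> e}" if y: "y \<in> records w k" "y \<le> x" for y
  proof -
    obtain e' where e': "y = w e'" "\<forall>e''<e'. w e'' < w e'"
      using y(1) unfolding records_def by blast
    hence "e' \<le> e" using y(2) e(1) by (meson leD not_le)
    thus ?thesis using e'(1) by blast
  qed
  thus ?thesis using e(2) by blast
qed

text \<open>The witness is the set of records of an enumeration of order type cf d of an unbounded
  set of size at most cf d.\<close>
lemma ex_unbounded_subset_small_initial_segments:
  assumes "\<not> finite (seg (cf d))" "\<forall>b<d. \<exists>w\<in>W. b<w"
  shows "\<exists>X\<subseteq>W. (\<forall>b<d. \<exists>x\<in>X. b<x) \<and> (\<forall>x\<in>X. |{y\<in>X. y \<le> x}| <o |seg (cf d)| )"
proof -
  obtain V where V: "V \<subseteq> W" "\<forall>b<d. \<exists>v\<in>V. b<v" "|V| \<le>o |seg (cf d)|"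
    using ex_unbounded_subset_card_cf[OF assms(2)] by blast
  have "\<not> finite (seg d)" using assms(1) seg_mono[OF cf_le] finite_subset by blast
  then obtain b0 where "b0 < d" unfolding seg_def by fastforce
  hence "V \<noteq> {}" using V(2) by blast
  hence "\<exists>w. w ` seg (cf d) = V" using card_of_ordLeq2[of V "seg (cf d)"] V(3) by simp
  then obtain w where w: "w ` seg (cf d) = V" by blast
  have "\<exists>x\<in>records w (cf d). b<x" if "b<d" for b
    using V(2) w that ex_records_greater unfolding seg_def by blast
  moreover have "|{y \<in> records w (cf d). y \<le> x}| <o |seg (cf d)|" if "x \<in> records w (cf d)" for x
  proof -
    obtain e where "e < cf d" "{y \<in> records w (cf d). y \<le> x} \<subseteq> w ` {e'. e' \<le> e}"
      using records_le_subset[OF \<open>x \<in> records w (cf d)\<close>] by blast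
    hence "|{y \<in> records w (cf d). y \<le> x}| \<le>o |w ` {e'. e' \<le> e}|" by (intro card_of_mono1)
    also have "|w ` {e'. e' \<le> e}| \<le>o |{e'. e' \<le> e}|" by (rule card_of_image)
    also have "|{e'. e' \<le> e}| <o |seg (cf d)|" by (rule card_of_atMost_less_cf[OF assms(1) \<open>e < cf d\<close>])
    finally show ?thesis .
  qed
  moreover have "records w (cf d) \<subseteq> W" using records_subset_image w V(1) by blast
  ultimately show ?thesis by (intro exI[of _ "records w (cf d)"]) blast
qed

lemma ex_thin_club:
  assumes "\<not> finite (seg (cf d))" "W \<subseteq> seg d" "\<forall>b<d. \<exists>w\<in>W. b<w"
  shows "\<exists>T. club_below d T \<and> (\<forall>b<d. |T \<inter> seg b| <o |seg (cf d)| )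
    \<and> (\<forall>c\<in>T. c \<in> W \<or> limit_point W c \<and> cf c < cf d)"
proof -
  obtain X where X: "X \<subseteq> W" "\<forall>b<d. \<exists>x\<in>X. b<x" "\<forall>x\<in>X. |{y\<in>X. y \<le> x}| <o |seg (cf d)|"
    using ex_unbounded_subset_small_initial_segments[OF assms(1,3)] by blast
  have Xd: "X \<subseteq> seg d" using X(1) assms(2) by blast
  let ?T = "closure_below X d"
  have "|?T \<inter> seg b| <o |seg (cf d)|" if "b < d" for b
  proof -
    obtain x where "x \<in> X" "b < x" using X(2) \<open>b < d\<close> by blast
    thus ?thesis
      using card_of_closure_below_Int_seg_ordLess[OF _ less_imp_le assms(1)] X(3) by blast
  qed
  moreover have "limit_point W c \<and> cf c < cf d" if "c \<in> ?T" "c \<notin> X" for c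
  proof
    have c: "c < d" "limit_point X c" using that unfolding closure_below_def by auto
    thus "limit_point W c" using X(1) limit_point_mono by blast
    obtain x where "x \<in> X" "c < x" using X(2) c(1) by blast
    have "cofinal_in (X \<inter> seg c) c"
      using c(2) unfolding cofinal_in_def limit_point_def seg_def by (blast intro: less_imp_le)
    hence "|seg (cf c)| \<le>o |X \<inter> seg c|" by (rule card_of_seg_cf_le)
    also have "|X \<inter> seg c| \<le>o |{y\<in>X. y \<le> x}|"
      using \<open>c < x\<close> by (intro card_of_mono1) (auto simp: seg_def)
    also have "|{y\<in>X. y \<le> x}| <o |seg (cf d)|" using X(3) \<open>x \<in> X\<close> by blast
    finally have "|seg (cf c)| <o |seg (cf d)|" .
    show "cf c < cf d"
    proof (rule ccontr)
      assume "\<not> cf c < cf d"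
      hence "|seg (cf d)| \<le>o |seg (cf c)|" by (intro card_of_mono1 seg_mono) simp
      thus False using \<open>|seg (cf c)| <o |seg (cf d)|\<close> not_ordLess_ordLeq by blast
    qed
  qed
  ultimately show ?thesis
    using club_below_closure_below[OF Xd X(2)] X(1) by (intro exI[of _ ?T]) blast
qed

definition diag_Int :: "'a::wellorder set \<Rightarrow> ('a \<Rightarrow> 'a set) \<Rightarrow> ('a \<Rightarrow> 'a) \<Rightarrow> 'a set" where
  "diag_Int T D h = {c\<in>T. \<forall>g\<in>T. g < c \<longrightarrow> (\<forall>j\<le>h g. c \<in> D j)}"

lemma diag_Int_closed:
  assumes "\<forall>j<cf d. club_below d (D j)" "club_below d T" "\<forall>x. h x < cf d"
    "e < d" "limit_point (diag_Int T D h) e"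
  shows "e \<in> diag_Int T D h"
proof -
  have "e \<in> T"
    using assms(2,4,5) club_below_closed limit_point_mono[of _ e T] unfolding diag_Int_def by blast
  moreover have "e \<in> D j" if "g \<in> T" "g < e" "j \<le> h g" for g j
  proof -
    have "\<exists>c\<in>D j. b<c \<and> c<e" if "b<e" for b
    proof -
      have "max b g < e" using that \<open>g<e\<close> by simp
      then obtain c where "c \<in> diag_Int T D h" "max b g < c" "c < e"
        using assms(5) unfolding limit_point_def by blast
      thus ?thesis using \<open>g\<in>T\<close> \<open>j \<le> h g\<close> unfolding diag_Int_def by auto
    qed
    hence "limit_point (D j) e" using \<open>g<e\<close> unfolding limit_point_def by blast
    thus ?thesis using club_below_closed assms(1,3,4) \<open>j \<le> h g\<close> le_less_trans by blast
  qed
  ultimately show ?thesis unfolding diag_Int_def by blast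
qed

text \<open>As the initial segments of T are small, h is bounded on T below x by some J < cf d,
  so y only has to exceed one point above x of each D j with j \<le> J.\<close>
lemma diag_Int_step:
  assumes "\<not> finite (seg (cf d))" "\<forall>j<cf d. club_below d (D j)" "club_below d T"
    "\<forall>b<d. |T \<inter> seg b| <o |seg (cf d)|" "\<forall>x. h x < cf d" "x < d"
  shows "\<exists>y<d. x<y \<and> (\<exists>t\<in>T. x<t \<and> t<y) \<and> (\<forall>g\<in>T. g<x \<longrightarrow> (\<forall>j\<le>h g. \<exists>p\<in>D j. x<p \<and> p<y))"
proof -
  have small: "|h ` (T \<inter> seg x)| <o |seg (cf d)|"
    by (rule ordLeq_ordLess_trans[OF card_of_image]) (use assms(4,6) in blast)
  have "h ` (T \<inter> seg x) \<subseteq> seg (cf d)" using assms(5) unfolding seg_def by blast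
  then obtain J where J: "J < cf d" "\<forall>y\<in>h ` (T \<inter> seg x). y \<le> J"
    using bounded_in_cf_of_card_less[OF _ small] by blast
  have "\<forall>j\<le>J. \<exists>p. p \<in> D j \<and> x < p"
    using assms(2,6) J(1) unfolding club_below_def by (meson le_less_trans)
  then obtain q where q: "\<forall>j\<le>J. q j \<in> D j \<and> x < q j" by metis
  obtain t where t: "t \<in> T" "x < t" using assms(3,6) unfolding club_below_def by blast
  let ?Q = "insert t (q ` {j. j \<le> J})"
  have "q j < d" if "j \<le> J" for j
  proof -
    have "D j \<subseteq> seg d" using assms(2) le_less_trans[OF that J(1)] unfolding club_below_def by blast
    thus ?thesis using q that unfolding seg_def by blast
  qed
  moreover have "t < d" using t assms(3) unfolding club_below_def seg_def by blast
  ultimately have "?Q \<subseteq> seg d" unfolding seg_def by blast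
  moreover have "|?Q| <o |seg (cf d)|"
    by (rule card_of_insert_ordLess_infinite[OF assms(1)],
        rule ordLeq_ordLess_trans[OF card_of_image card_of_atMost_less_cf[OF assms(1) J(1)]])
  ultimately obtain y where y: "y<d" "\<forall>z\<in>?Q. z<y" using bounded_of_card_less_cf by blast
  have "\<exists>p\<in>D j. x<p \<and> p<y" if "g \<in> T" "g < x" "j \<le> h g" for g j
  proof -
    have "h g \<le> J" using J(2) that(1,2) unfolding seg_def by blast
    hence "j \<le> J" using that(3) by simp
    thus ?thesis using q y(2) by blast
  qed
  moreover have "x < y" using t y by (meson insertI1 less_trans)
  ultimately show ?thesis using t y by blast
qed

lemma diag_Int_unbounded:
  assumes "\<not> countable (seg (cf d))" "\<forall>j<cf d. club_below d (D j)" "club_below d T"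
    "\<forall>b<d. |T \<inter> seg b| <o |seg (cf d)|" "\<forall>x. h x < cf d" "b < d"
  shows "\<exists>e\<in>diag_Int T D h. b < e"
proof -
  let ?R = "\<lambda>x y. (\<exists>t\<in>T. x<t \<and> t<y) \<and> (\<forall>g\<in>T. g<x \<longrightarrow> (\<forall>j\<le>h g. \<exists>p\<in>D j. x<p \<and> p<y))"
  have "\<not> finite (seg (cf d))" using assms(1) countable_finite by blast
  then obtain s e where s: "s 0 = b" "\<forall>n. s n < s (Suc n) \<and> ?R (s n) (s (Suc n))"
    and e: "e < d" "seq_limit s e"
    using ex_seq_limit_below[OF assms(1) diag_Int_step[OF _ assms(2-5)] assms(6)] by blast
  have s_mono: "s n \<le> s m" if "n \<le> m" for n m
    using lift_Suc_mono_le[of s n m] s(2) that less_imp_le by blast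
  have "limit_point T e" using s(2) by (intro limit_point_of_seq_limit[OF e(2), of 0]) auto
  hence "e \<in> T" using club_below_closed[OF assms(3) e(1)] by blast
  moreover have "e \<in> D j" if "g \<in> T" "g < e" "j \<le> h g" for g j
  proof -
    obtain n0 where "g < s n0" using e(2) \<open>g < e\<close> unfolding seq_limit_def by blast
    hence "\<forall>n\<ge>n0. \<exists>p\<in>D j. s n < p \<and> p < s (Suc n)"
      using s(2) s_mono that by (meson less_le_trans)
    hence "limit_point (D j) e" using s(2) by (intro limit_point_of_seq_limit[OF e(2)]) auto
    thus ?thesis using club_below_closed assms(2,5) e(1) \<open>j \<le> h g\<close> le_less_trans by blast
  qed
  ultimately have "e \<in> diag_Int T D h" unfolding diag_Int_def by blast
  moreover have "b < e" using e(2) s(1) unfolding seq_limit_def by metis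
  ultimately show ?thesis by blast
qed

lemma club_below_diag_Int:
  assumes "\<not> countable (seg (cf d))" "\<forall>j<cf d. club_below d (D j)" "club_below d T"
    "\<forall>b<d. |T \<inter> seg b| <o |seg (cf d)|" "\<forall>x. h x < cf d"
  shows "club_below d (diag_Int T D h)"
  unfolding club_below_def
proof (intro conjI allI impI)
  show "diag_Int T D h \<subseteq> seg d" using assms(3) unfolding club_below_def diag_Int_def by blast
  show "\<exists>c\<in>diag_Int T D h. b<c" if "b<d" for b using diag_Int_unbounded[OF assms that] .
next
  fix e assume "e < d" "(\<exists>c\<in>diag_Int T D h. c < e) \<and> (\<forall>b<e. \<exists>c\<in>diag_Int T D h. b < c \<and> c < e)"
  thus "e \<in> diag_Int T D h" using diag_Int_closed[OF assms(2,3,5)] unfolding limit_point_def by blast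
qed

locale successor_of_singular =
  fixes mu kappa :: "'a::wellorder" and mus :: "'a \<Rightarrow> 'a"
  assumes lambda_succ: "\<forall>x::'a. |seg x| \<le>o |seg mu|"
    and lambda_big: "|seg mu| <o |UNIV :: 'a set|"
    and kappa_cf: "kappa = cf mu"
    and kappa_unc: "\<not> countable (seg kappa)"
    and kappa_lt: "kappa < mu"
    and mus_incr: "\<forall>i j. i < j \<and> j < kappa \<longrightarrow> mus i < mus j"
    and mus0: "kappa < mus ord0"
    and mu_sum: "|seg mu| =o |SIGMA i:seg kappa. seg (mus i)|"
begin

lemma kappa_infinite: "\<not> finite (seg kappa)"
  using kappa_unc countable_finite by blast

lemma seg_mu_infinite: "\<not> finite (seg mu)"
  using kappa_infinite finite_subset[OF seg_mono[OF less_imp_le[OF kappa_lt]]] by blast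

lemma ord0_less_kappa: "ord0 < kappa"
proof -
  have "seg ord0 = {}" using ord0_le leD unfolding seg_def by blast
  hence "kappa \<noteq> ord0" using kappa_infinite by (metis finite.emptyI)
  thus ?thesis using ord0_le[of kappa] by (simp add: le_less)
qed

lemma bounded_of_card_le_mu:
  assumes "|Y::'a set| \<le>o |seg mu|" shows "\<exists>b. \<forall>y\<in>Y. y<b"
proof (rule ccontr)
  assume "\<not> (\<exists>b. \<forall>y\<in>Y. y<b)"
  hence "\<forall>b. \<exists>y\<in>Y. b \<le> y" by (meson not_less)
  hence "UNIV = (\<Union>y\<in>Y. insert y (seg y))" unfolding seg_def using le_less by blast
  moreover have "|insert y (seg y)| \<le>o |seg mu|" for y :: 'a
  proof -
    have "|{y}| \<le>o |seg mu|"
      by (intro ordLess_imp_ordLeq card_of_finite_less_infinite seg_mu_infinite) simp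
    hence "|{y} \<union> seg y| \<le>o |seg mu|"
      by (rule card_of_Un_ordLeq_infinite[OF seg_mu_infinite _ lambda_succ[rule_format]])
    thus ?thesis by simp
  qed
  hence "|\<Union>y\<in>Y. insert y (seg y)| \<le>o |seg mu|"
    by (intro card_of_UNION_ordLeq_infinite[OF seg_mu_infinite assms]) blast
  ultimately have "|UNIV::'a set| \<le>o |seg mu|" by simp
  thus False using lambda_big not_ordLess_ordLeq by blast
qed

lemma countable_bounded:
  assumes "countable (Y::'a set)" shows "\<exists>b. \<forall>y\<in>Y. y<b"
proof (rule bounded_of_card_le_mu)
  have "|Y| <o |seg kappa|" by (rule card_of_countable_less_uncountable[OF assms kappa_unc])
  moreover have "|seg kappa| \<le>o |seg mu|" using kappa_lt by (intro card_of_mono1 seg_mono) simp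
  ultimately show "|Y| \<le>o |seg mu|" using ordLess_ordLeq_trans ordLess_imp_ordLeq by blast
qed

lemma bounded_in_kappa_of_card_less:
  "Y \<subseteq> seg kappa \<Longrightarrow> |Y| <o |seg kappa| \<Longrightarrow> \<exists>i<kappa. \<forall>y\<in>Y. y \<le> i"
  using bounded_in_cf_of_card_less kappa_cf by simp

lemma mus_mono: "j \<le> i \<Longrightarrow> i < kappa \<Longrightarrow> mus j \<le> mus i"
  using mus_incr by (cases "j = i") (auto simp: le_less)

lemma kappa_less_mus: "i < kappa \<Longrightarrow> kappa < mus i"
  using mus0 mus_mono[OF ord0_le] by (blast intro: less_le_trans)

lemma seg_mus_infinite: "i < kappa \<Longrightarrow> \<not> finite (seg (mus i))"
  using kappa_infinite finite_subset[OF seg_mono[OF less_imp_le[OF kappa_less_mus]]] by blast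

lemma card_of_kappa_le_mus: "i < kappa \<Longrightarrow> |seg kappa| \<le>o |seg (mus i)|"
  by (rule card_of_mono1[OF seg_mono[OF less_imp_le[OF kappa_less_mus]]])

subsection \<open>The sets a^d_i\<close>

definition code :: "'a \<Rightarrow> 'a \<Rightarrow> 'a \<times> 'a" where
  "code d = (SOME g. inj_on g (seg d) \<and> g ` seg d \<subseteq> (SIGMA i:seg kappa. seg (mus i)))"

lemma code: "inj_on (code d) (seg d) \<and> code d ` seg d \<subseteq> (SIGMA i:seg kappa. seg (mus i))"
proof -
  have "|seg d| \<le>o |SIGMA i:seg kappa. seg (mus i)|"
    using lambda_succ mu_sum ordLeq_ordIso_trans by blast
  thus ?thesis unfolding code_def using card_of_ordLeq someI_ex by (metis (no_types, lifting))
qed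

lemma fst_code_less_kappa: "z < d \<Longrightarrow> fst (code d z) < kappa"
  using code unfolding seg_def by fastforce

definition coded_below :: "'a \<Rightarrow> 'a \<Rightarrow> 'a set" where
  "coded_below d i = {z. z < d \<and> fst (code d z) \<le> i}"

lemma coded_below_mono: "i \<le> j \<Longrightarrow> coded_below d i \<subseteq> coded_below d j"
  unfolding coded_below_def by auto

lemma coded_below_subset_seg: "coded_below d i \<subseteq> seg d"
  unfolding coded_below_def seg_def by auto

lemma card_of_coded_below: assumes "i < kappa" shows "|coded_below d i| \<le>o |seg (mus i)|"
proof -
  have "code d ` coded_below d i \<subseteq> {j. j \<le> i} \<times> seg (mus i)"
  proof
    fix p assume "p \<in> code d ` coded_below d i"
    then obtain z where z: "z < d" "fst (code d z) \<le> i" "p = code d z"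
      unfolding coded_below_def by blast
    hence "snd p < mus (fst p)" using code unfolding seg_def by fastforce
    moreover have "mus (fst p) \<le> mus i" using mus_mono z assms by simp
    ultimately have "snd p < mus i" by (rule less_le_trans)
    thus "p \<in> {j. j \<le> i} \<times> seg (mus i)" using z unfolding seg_def by (simp add: mem_Times_iff)
  qed
  moreover have "inj_on (code d) (coded_below d i)"
    by (rule inj_on_subset[OF conjunct1[OF code] coded_below_subset_seg])
  ultimately have "|coded_below d i| \<le>o |{j. j \<le> i} \<times> seg (mus i)|"
    using card_of_ordLeq by blast
  moreover have "|{j. j \<le> i}| \<le>o |seg (mus i)|"
    using kappa_less_mus[OF assms] assms by (intro card_of_mono1) (auto simp: seg_def)
  hence "|{j. j \<le> i} \<times> seg (mus i)| \<le>o |seg (mus i)|"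
    using card_of_Times_ordLeq_infinite_Field[of "|seg (mus i)|"] seg_mus_infinite[OF assms]
      ordIso_imp_ordLeq[OF card_of_refl[of "seg (mus i)"]]
    by (simp add: Field_card_of card_of_card_order_on)
  ultimately show ?thesis by (rule ordLeq_transitive)
qed

definition cof_set :: "'a \<Rightarrow> 'a set" where
  "cof_set d = (SOME X. cofinal_in X d \<and> |X| =o |seg (cf d)| )"

lemma cof_set: "cofinal_in (cof_set d) d \<and> |cof_set d| =o |seg (cf d)|"
  unfolding cof_set_def by (rule someI_ex) (rule ex_cofinal_card_cf)

definition ladder :: "'a \<Rightarrow> 'a set" where
  "ladder d = (if cf d \<le> kappa then closure_below (cof_set d) d else {})"

lemma ladder_subset_seg: "ladder d \<subseteq> seg d"
  unfolding ladder_def using closure_below_subset_seg by auto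

lemma card_of_ladder: "|ladder d| \<le>o |seg kappa|"
proof (cases "cf d \<le> kappa")
  case True
  have "|cof_set d| \<le>o |seg kappa|"
    using cof_set card_of_mono1[OF seg_mono[OF True]] ordIso_ordLeq_trans by blast
  hence "|closure_below (cof_set d) d| \<le>o |seg kappa|"
    using card_of_closure_below_ordLeq cof_set kappa_infinite by blast
  thus ?thesis using True unfolding ladder_def by simp
qed (simp add: ladder_def card_of_empty)

lemma club_below_ladder:
  assumes "\<not> countable (seg (cf g))" "cf g \<le> kappa" shows "club_below g (ladder g)"
proof -
  have "\<exists>c\<in>cof_set g. b<c" if "b < g" for b
  proof -
    obtain c where "b<c" "c<g" using ex_between_of_uncountable_cf[OF assms(1) \<open>b<g\<close>] by blast
    thus ?thesis using cof_set unfolding cofinal_in_def by (meson less_le_trans)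
  qed
  moreover have "cof_set g \<subseteq> seg g" using cof_set unfolding cofinal_in_def by blast
  ultimately have "club_below g (closure_below (cof_set g) g)"
    by (intro club_below_closure_below) auto
  thus ?thesis using assms(2) unfolding ladder_def by simp
qed

definition approx :: "'a \<Rightarrow> 'a \<Rightarrow> 'a set" where
  "approx = wfrec {(x,y). x<y} (\<lambda>F d i. coded_below d i \<union> ladder d \<union> (\<Union>b\<in>ladder d. F b i))"

lemma approx_eq: "approx d i = coded_below d i \<union> ladder d \<union> (\<Union>b\<in>ladder d. approx b i)"
proof -
  have "approx d = (\<lambda>i. coded_below d i \<union> ladder d \<union> (\<Union>b\<in>ladder d. cut approx {(x,y). x<y} d b i))"
    unfolding approx_def by (rule wfrec[OF wf])
  moreover have "cut approx {(x,y). x<y} d b = approx b" if "b \<in> ladder d" for b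
    using that ladder_subset_seg unfolding seg_def by (intro cut_apply) auto
  ultimately show ?thesis by simp
qed

lemma approx_subset_seg: "approx d i \<subseteq> seg d"
proof (induction d rule: less_induct)
  case (less d)
  have "approx b i \<subseteq> seg d" if "b \<in> ladder d" for b
  proof -
    have "b < d" using that ladder_subset_seg unfolding seg_def by blast
    thus ?thesis using less.IH seg_mono[of b d] by force
  qed
  thus ?case using approx_eq[of d i] coded_below_subset_seg ladder_subset_seg by blast
qed

lemma approx_mono: "i \<le> j \<Longrightarrow> approx d i \<subseteq> approx d j"
proof (induction d rule: less_induct)
  case (less d)
  have "approx b i \<subseteq> approx b j" if "b \<in> ladder d" for b
    using that ladder_subset_seg less unfolding seg_def by blast
  thus ?case using approx_eq[of d i] approx_eq[of d j] coded_below_mono[OF less.prems] by blast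
qed

lemma card_of_approx: assumes "i < kappa" shows "|approx d i| \<le>o |seg (mus i)|"
proof (induction d rule: less_induct)
  case (less d)
  have ladder: "|ladder d| \<le>o |seg (mus i)|"
    using card_of_ladder card_of_kappa_le_mus[OF assms] by (rule ordLeq_transitive)
  have "|approx b i| \<le>o |seg (mus i)|" if "b \<in> ladder d" for b
    using that ladder_subset_seg less unfolding seg_def by blast
  hence "|\<Union>b\<in>ladder d. approx b i| \<le>o |seg (mus i)|"
    by (intro card_of_UNION_ordLeq_infinite[OF seg_mus_infinite[OF assms] ladder]) blast
  moreover have "|coded_below d i \<union> ladder d| \<le>o |seg (mus i)|"
    by (rule card_of_Un_ordLeq_infinite[OF seg_mus_infinite[OF assms] card_of_coded_below[OF assms] ladder])
  ultimately show ?case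
    using card_of_Un_ordLeq_infinite[OF seg_mus_infinite[OF assms]] approx_eq[of d i] by metis
qed

lemma coded_below_subset_approx: "coded_below d i \<subseteq> approx d i"
  using approx_eq[of d i] by blast

lemma approx_subset_of_ladder: "b \<in> ladder d \<Longrightarrow> approx b i \<subseteq> approx d i"
  using approx_eq[of d i] by blast

lemma ex_bound_image_seg: "\<exists>y. x < y \<and> (\<forall>z<x. (g::'a \<Rightarrow> 'a) z < y)"
proof -
  have "|{x}| \<le>o |seg mu|"
    by (intro ordLess_imp_ordLeq card_of_finite_less_infinite seg_mu_infinite) simp
  moreover have "|g ` seg x| \<le>o |seg mu|"
    by (rule ordLeq_transitive[OF card_of_image lambda_succ[rule_format]])
  ultimately have "|{x} \<union> g ` seg x| \<le>o |seg mu|" by (rule card_of_Un_ordLeq_infinite[OF seg_mu_infinite])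
  then obtain y where "\<forall>q\<in>{x} \<union> g ` seg x. q < y" using bounded_of_card_le_mu by blast
  thus ?thesis unfolding seg_def by blast
qed

subsection \<open>The sets A^f_i\<close>

context
  fixes f :: "'a \<Rightarrow> 'a"
begin

definition closed_under :: "'a set" where
  "closed_under = {d. \<forall>z<d. f z < d}"

definition closed_limits :: "'a set" where
  "closed_limits = {d. limit_point closed_under d}"

lemma closed_under_unbounded: "\<exists>p\<in>closed_under. b < p"
proof -
  have "\<exists>s d. s 0 = b \<and> (\<forall>n. s n < s (Suc n) \<and> (\<forall>z<s n. f z < s (Suc n))) \<and> d \<in> UNIV
    \<and> seq_limit s d"
    by (rule ex_seq_limit) (use ex_bound_image_seg countable_bounded in auto)
  then obtain s d where s: "s 0 = b" "\<forall>n. s n < s (Suc n) \<and> (\<forall>z<s n. f z < s (Suc n))"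
    and d: "seq_limit s d" by blast
  have "f z < d" if "z < d" for z
  proof -
    obtain n where "z < s n" using d \<open>z < d\<close> unfolding seq_limit_def by blast
    thus ?thesis using s(2) d unfolding seq_limit_def by (meson less_trans)
  qed
  moreover have "b < d" using d s(1) unfolding seq_limit_def by metis
  ultimately show ?thesis unfolding closed_under_def by blast
qed

lemma closed_limits_closed: "limit_point closed_limits d \<Longrightarrow> d \<in> closed_limits"
  using limit_point_trans[of closed_limits closed_under d] unfolding closed_limits_def by blast

lemma club_closed_limits: "club closed_limits"
  unfolding club_def
proof (intro conjI allI impI)
  fix b
  have "\<exists>y. x < y \<and> (\<exists>p\<in>closed_under. x<p \<and> p<y)" for x
    using closed_under_unbounded ex_bound_image_seg by (meson less_trans)
  hence "\<exists>s d. s 0 = b \<and> (\<forall>n. s n < s (Suc n) \<and> (\<exists>p\<in>closed_under. s n<p \<and> p<s (Suc n)))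
    \<and> d \<in> UNIV \<and> seq_limit s d"
    by (intro ex_seq_limit) (use countable_bounded in auto)
  then obtain s d where s: "s 0 = b" "\<forall>n. s n < s (Suc n) \<and> (\<exists>p\<in>closed_under. s n<p \<and> p<s (Suc n))"
    and d: "seq_limit s d" by blast
  have "d \<in> closed_limits"
    unfolding closed_limits_def using s(2) by (auto intro: limit_point_of_seq_limit[OF d, of 0])
  moreover have "b < d" using d s(1) unfolding seq_limit_def by metis
  ultimately show "\<exists>c\<in>closed_limits. b < c" by blast
next
  fix d assume "(\<exists>c\<in>closed_limits. c < d) \<and> (\<forall>b<d. \<exists>c\<in>closed_limits. b < c \<and> c < d)"
  thus "d \<in> closed_limits" using closed_limits_closed unfolding limit_point_def by blast
qed

lemma closed_limits_closed_under:
  assumes "d \<in> closed_limits" "z < d" shows "f z < d"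
proof -
  obtain c where "c \<in> closed_under" "z < c" "c < d"
    using assms unfolding closed_limits_def limit_point_def by blast
  thus ?thesis unfolding closed_under_def by (blast intro: less_trans)
qed

definition pairs :: "'a \<Rightarrow> 'a \<Rightarrow> 'a set" where
  "pairs d i = {z \<in> approx d i. f z \<in> approx d i}"

lemma mem_Aset_iff: "d \<in> Aset approx f i \<longleftrightarrow> (\<forall>b<d. \<exists>z\<in>pairs d i. b < z)"
  unfolding Aset_def pairs_def is_sup_of_def by simp

lemma pairs_mono: "i \<le> j \<Longrightarrow> pairs d i \<subseteq> pairs d j"
  unfolding pairs_def using approx_mono by blast

lemma Aset_mono: "i \<le> j \<Longrightarrow> Aset approx f i \<subseteq> Aset approx f j"
  unfolding mem_Aset_iff subset_iff using pairs_mono by blast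

definition index :: "'a \<Rightarrow> 'a \<Rightarrow> 'a" where
  "index d z = max (fst (code d z)) (fst (code d (f z)))"

lemma index:
  assumes "d \<in> closed_limits" "z < d" shows "index d z < kappa \<and> z \<in> pairs d (index d z)"
proof -
  have "f z < d" using closed_limits_closed_under assms by blast
  hence "z \<in> coded_below d (index d z) \<and> f z \<in> coded_below d (index d z)"
    using assms(2) unfolding coded_below_def index_def by simp
  thus ?thesis using coded_below_subset_approx fst_code_less_kappa assms(2) \<open>f z < d\<close>
    unfolding pairs_def index_def by auto
qed

lemma ex_Aset_of_cf_less:
  assumes "d \<in> closed_limits" "cf d < kappa" shows "\<exists>i<kappa. d \<in> Aset approx f i"
proof -
  let ?X = "cof_set d"
  have "|index d ` ?X| \<le>o |?X|" by (rule card_of_image)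
  also have "|?X| =o |seg (cf d)|" using cof_set by blast
  also have "|seg (cf d)| <o |seg kappa|" using card_of_seg_less_cf assms(2) kappa_cf by blast
  finally have "|index d ` ?X| <o |seg kappa|" .
  moreover have "index d ` ?X \<subseteq> seg kappa"
    using index[OF assms(1)] cof_set unfolding cofinal_in_def seg_def by auto
  ultimately obtain i where i: "i < kappa" "\<forall>x\<in>?X. index d x \<le> i"
    using bounded_in_kappa_of_card_less by (metis image_eqI)
  have "\<exists>z\<in>pairs d i. b < z" if "b < d" for b
  proof -
    obtain c where "b < c" "c < d" using assms(1) \<open>b < d\<close> unfolding closed_limits_def limit_point_def by blast
    then obtain x where x: "x \<in> ?X" "c \<le> x" using cof_set unfolding cofinal_in_def by blast
    hence "x < d" using cof_set unfolding cofinal_in_def seg_def by blast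
    hence "x \<in> pairs d i" using index[OF assms(1)] i(2) x(1) pairs_mono by blast
    thus ?thesis using \<open>b < c\<close> x(2) by (meson less_le_trans)
  qed
  thus ?thesis using i(1) mem_Aset_iff by blast
qed

lemma ex_Aset_of_cf_greater:
  assumes "d \<in> closed_limits" "kappa < cf d" shows "\<exists>i<kappa. d \<in> Aset approx f i"
proof (rule ccontr)
  assume "\<not> (\<exists>i<kappa. d \<in> Aset approx f i)"
  then obtain bd where bd: "\<forall>i<kappa. bd i < d \<and> (\<forall>z\<in>pairs d i. \<not> bd i < z)"
    unfolding mem_Aset_iff by metis
  have "|bd ` seg kappa| \<le>o |seg kappa|" by (rule card_of_image)
  also have "|seg kappa| <o |seg (cf d)|" by (rule card_of_seg_less_cf[OF assms(2)])
  finally have "|bd ` seg kappa| <o |seg (cf d)|" .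
  moreover have "bd ` seg kappa \<subseteq> seg d" using bd unfolding seg_def by auto
  ultimately obtain s where s: "s < d" "\<forall>y\<in>bd ` seg kappa. y < s"
    using bounded_of_card_less_cf by blast
  have "bd (index d s) < s" using s(2) index[OF assms(1) s(1)] unfolding seg_def by blast
  thus False using bd index[OF assms(1) s(1)] by blast
qed

lemma ex_Aset_of_cf_ne:
  "d \<in> closed_limits \<Longrightarrow> cf d \<noteq> kappa \<Longrightarrow> \<exists>i<kappa. d \<in> Aset approx f i"
  using ex_Aset_of_cf_less ex_Aset_of_cf_greater by (meson linorder_neqE)

lemma not_stationary_cf_ne_minus_Aset:
  "\<not> stationary ({d. cf d \<noteq> kappa} - (\<Union>i\<in>seg kappa. Aset approx f i))"
proof -
  have "({d. cf d \<noteq> kappa} - (\<Union>i\<in>seg kappa. Aset approx f i)) \<inter> closed_limits = {}"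
    using ex_Aset_of_cf_ne unfolding seg_def by blast
  thus ?thesis unfolding stationary_def using club_closed_limits by blast
qed

lemma mem_Aset_of_reflects:
  assumes "\<not> countable (seg (cf g))" "cf g \<le> kappa" "reflects (Aset approx f i) g"
  shows "g \<in> Aset approx f i"
  unfolding mem_Aset_iff
proof (intro allI impI)
  fix b assume "b < g"
  have "club_below g {c \<in> ladder g. b < c}"
    by (rule club_below_above[OF club_below_ladder[OF assms(1,2)] \<open>b<g\<close>])
  moreover have "stationary_below g (Aset approx f i \<inter> seg g)"
    using assms(3) unfolding reflects_def by blast
  ultimately have "Aset approx f i \<inter> seg g \<inter> {c \<in> ladder g. b < c} \<noteq> {}"
    unfolding stationary_below_def by blast
  then obtain c where c: "c \<in> Aset approx f i" "c \<in> ladder g" "b < c" by blast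
  then obtain z where "z \<in> pairs c i" "b < z" unfolding mem_Aset_iff by blast
  moreover have "pairs c i \<subseteq> pairs g i"
    unfolding pairs_def using approx_subset_of_ladder[OF c(2)] by blast
  ultimately show "\<exists>z\<in>pairs g i. b < z" by blast
qed

definition least_index :: "'a \<Rightarrow> 'a" where
  "least_index b = (if \<exists>i<kappa. b \<in> Aset approx f i then LEAST i. b \<in> Aset approx f i else ord0)"

lemma least_index_less_kappa: "least_index b < kappa"
proof (cases "\<exists>i<kappa. b \<in> Aset approx f i")
  case True
  then obtain i where "i < kappa" "b \<in> Aset approx f i" by blast
  hence "(LEAST i. b \<in> Aset approx f i) < kappa" by (meson Least_le le_less_trans)
  thus ?thesis using True unfolding least_index_def by simp
next
  case False thus ?thesis unfolding least_index_def using ord0_less_kappa by auto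
qed

lemma mem_Aset_least_index:
  assumes "i < kappa" "b \<in> Aset approx f i" shows "b \<in> Aset approx f (least_index b)"
  using LeastI[of "\<lambda>i. b \<in> Aset approx f i", OF assms(2)] assms unfolding least_index_def by auto

lemma ex_clubs_disjoint_Aset:
  assumes "cf d = kappa" "\<forall>i<kappa. d \<notin> Aset approx f i"
  shows "\<exists>D. \<forall>j<kappa. club_below d (D j) \<and> D j \<inter> Aset approx f j = {}"
proof -
  have "\<exists>C. club_below d C \<and> C \<inter> Aset approx f j = {}" if "j < kappa" for j
  proof -
    have "\<not> reflects (Aset approx f j) d"
      using mem_Aset_of_reflects assms kappa_unc that by fastforce
    then obtain C where "club_below d C" "Aset approx f j \<inter> seg d \<inter> C = {}"
      using assms(1) kappa_unc unfolding reflects_def stationary_below_def by auto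
    moreover have "C \<subseteq> seg d" using \<open>club_below d C\<close> unfolding club_below_def by blast
    ultimately show ?thesis by blast
  qed
  thus ?thesis by metis
qed

lemma ex_thin_club_in_Aset:
  assumes "d \<in> closed_limits" "cf d = kappa"
  shows "\<exists>T. club_below d T \<and> (\<forall>b<d. |T \<inter> seg b| <o |seg kappa| )
    \<and> (\<forall>c\<in>T. \<exists>i<kappa. c \<in> Aset approx f i)"
proof -
  let ?W = "{p. p < d \<and> p \<in> closed_limits \<and> countable (seg (cf p))}"
  have unc: "\<not> countable (seg (cf d))" using assms(2) kappa_unc by simp
  have unbounded: "\<exists>w\<in>?W. b < w" if "b < d" for b
  proof -
    have "limit_point closed_under d" using assms(1) unfolding closed_limits_def by blast
    then obtain p where "b < p" "p < d" "limit_point closed_under p" "countable (seg (cf p))"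
      using ex_limit_point_countable_cf[OF unc _ \<open>b < d\<close>] by blast
    thus ?thesis unfolding closed_limits_def by blast
  qed
  moreover have "?W \<subseteq> seg d" unfolding seg_def by blast
  moreover have "\<not> finite (seg (cf d))" using unc countable_finite by blast
  ultimately obtain T where T: "club_below d T" "\<forall>b<d. |T \<inter> seg b| <o |seg (cf d)|"
    "\<forall>c\<in>T. c \<in> ?W \<or> limit_point ?W c \<and> cf c < cf d"
    using ex_thin_club[of d ?W] by blast
  have "c \<in> closed_limits \<and> cf c \<noteq> kappa" if "c \<in> T" for c
  proof (cases "c \<in> ?W")
    case True thus ?thesis using kappa_unc by auto
  next
    case False
    hence "limit_point ?W c" "cf c < kappa" using T(3) that assms(2) by auto
    hence "limit_point closed_limits c" using limit_point_mono by blast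
    thus ?thesis using closed_limits_closed \<open>cf c < kappa\<close> by blast
  qed
  thus ?thesis using T(1,2) ex_Aset_of_cf_ne assms(2) by metis
qed

lemma strict_mono_on_least_index:
  assumes "\<forall>j<kappa. D j \<inter> Aset approx f j = {}" "\<forall>c\<in>T. \<exists>i<kappa. c \<in> Aset approx f i"
  shows "strict_mono_on (diag_Int T D least_index) least_index"
proof (rule strict_mono_onI)
  fix r s assume rs: "r \<in> diag_Int T D least_index" "s \<in> diag_Int T D least_index" "r < s"
  have "s \<in> Aset approx f (least_index s)"
    using assms(2) rs(2) mem_Aset_least_index unfolding diag_Int_def by blast
  moreover have "s \<notin> Aset approx f j" if "j \<le> least_index r" for j
  proof -
    have "s \<in> D j" using rs that unfolding diag_Int_def by blast
    moreover have "j < kappa" using that least_index_less_kappa by (rule le_less_trans)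
    ultimately show ?thesis using assms(1) by blast
  qed
  ultimately show "least_index r < least_index s" by (meson not_less)
qed

lemma minus_Aset_in_Ideal_I:
  "(Scof kappa - (\<Union>i\<in>seg kappa. Aset approx f i)) - (- closed_limits) \<in> Ideal_I kappa"
  unfolding Ideal_I_def
proof (intro CollectI exI[of _ least_index] conjI allI ballI)
  show "least_index x < kappa" for x by (rule least_index_less_kappa)
next
  fix d assume "d \<in> (Scof kappa - (\<Union>i\<in>seg kappa. Aset approx f i) - - closed_limits) \<inter> Scof kappa"
  hence d: "cf d = kappa" "d \<in> closed_limits" "\<forall>i<kappa. d \<notin> Aset approx f i"
    unfolding Scof_def seg_def by auto
  obtain D where D: "\<forall>j<kappa. club_below d (D j) \<and> D j \<inter> Aset approx f j = {}"
    using ex_clubs_disjoint_Aset[OF d(1,3)] by blast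
  obtain T where T: "club_below d T" "\<forall>b<d. |T \<inter> seg b| <o |seg kappa|"
    "\<forall>c\<in>T. \<exists>i<kappa. c \<in> Aset approx f i"
    using ex_thin_club_in_Aset[OF d(2,1)] by blast
  have "club_below d (diag_Int T D least_index)"
    using club_below_diag_Int[of d D T least_index] D T(1,2) d(1) kappa_unc least_index_less_kappa
    by simp
  moreover have "strict_mono_on (diag_Int T D least_index) least_index"
    using strict_mono_on_least_index D T(3) by blast
  ultimately show "\<exists>C. club_below d C \<and> strict_mono_on C least_index" by blast
qed

end

end

theorem lemma2p7:
  fixes mu kappa :: "'a::wellorder" and mus :: "'a \<Rightarrow> 'a"
  assumes mu_card: "is_cardinal mu"
    and lambda_succ: "\<forall>x::'a. card_of (seg x) <=o card_of (seg mu)"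
    and lambda_big: "card_of (seg mu) <o card_of (UNIV :: 'a set)"
    and kappa_cf: "kappa = cf mu"
    and kappa_unc: "\<not> countable (seg kappa)"
    and kappa_lt: "kappa < mu"
    and mus_card: "\<forall>i<kappa. is_cardinal (mus i)"
    and mus_incr: "\<forall>i j. i < j \<and> j < kappa \<longrightarrow> mus i < mus j"
    and mus_cont: "\<forall>j<kappa. is_limit j \<longrightarrow> (\<forall>b < mus j. \<exists>i<j. b < mus i)"
    and mus0: "kappa < mus ord0"
    and mu_sum: "card_of (seg mu) =o card_of (SIGMA i:seg kappa. seg (mus i))"
  shows "\<exists>a :: 'a \<Rightarrow> 'a \<Rightarrow> 'a set.
     (\<forall>al. \<forall>i<kappa. a al i \<subseteq> seg al \<and> card_of (a al i) <=o card_of (seg (mus i)))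
   \<and> (\<forall>al i j. i \<le> j \<and> j < kappa \<longrightarrow> a al i \<subseteq> a al j)
   \<and> (\<forall>f :: 'a \<Rightarrow> 'a.
        (\<forall>i j. i \<le> j \<and> j < kappa \<longrightarrow> Aset a f i \<subseteq> Aset a f j)
      \<and> \<not> stationary ({d. cf d \<noteq> kappa} - (\<Union>i\<in>seg kappa. Aset a f i))
      \<and> (\<forall>g i. \<not> countable (seg (cf g)) \<and> cf g \<le> kappa \<and> i < kappa
              \<and> reflects (Aset a f i) g \<longrightarrow> g \<in> Aset a f i)
      \<and> (\<forall>i<kappa. \<forall>d \<in> Scof kappa - (\<Union>i\<in>seg kappa. Aset a f i).
              \<not> reflects (Aset a f i) d)
      \<and> (\<exists>N. \<not> stationary N
              \<and> (Scof kappa - (\<Union>i\<in>seg kappa. Aset a f i)) - N \<in> Ideal_I kappa))"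
proof -
  interpret successor_of_singular mu kappa mus
    using lambda_succ lambda_big kappa_cf kappa_unc kappa_lt mus_incr mus0 mu_sum
    by unfold_locales
  show ?thesis
  proof (intro exI[of _ approx] conjI allI impI ballI)
    fix al i assume "i < kappa"
    thus "approx al i \<subseteq> seg al" "|approx al i| \<le>o |seg (mus i)|"
      using approx_subset_seg card_of_approx by auto
  next
    show "\<not> stationary ({d. cf d \<noteq> kappa} - (\<Union>i\<in>seg kappa. Aset approx f i))" for f
      by (rule not_stationary_cf_ne_minus_Aset)
  next
    fix f i d assume "i < kappa" "d \<in> Scof kappa - (\<Union>i\<in>seg kappa. Aset approx f i)"
    thus "\<not> reflects (Aset approx f i) d"
      using mem_Aset_of_reflects[of d f i] kappa_unc unfolding Scof_def seg_def by auto
  next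
    show "\<exists>N. \<not> stationary N \<and> Scof kappa - (\<Union>i\<in>seg kappa. Aset approx f i) - N \<in> Ideal_I kappa"
      for f using minus_Aset_in_Ideal_I not_stationary_Compl_club[OF club_closed_limits] by blast
  qed (use approx_mono Aset_mono mem_Aset_of_reflects in auto)
qed

end
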